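(* Let $M$ be a generic regular closed curve with arc-length parameterization $f$. Then the number of elements of the sequence of division points $\mathcal{S}_M$ is even.
   Context: Generic means $f$ lies in the set $\mathcal{G}$: $f$ is regular with only transversal self-crossings, only non-degenerate inflexion points (curvature changes sign and $\det(f',f''')\ne0$) and no undulation points; at least one point of each parallel pair is not an inflexion point; and further finitely many non-degeneracy conditions on parallel pairs (involving curvature, its first two arc-length derivatives, and collinearity of chords) hold. Two distinct points of $M$ form a parallel pair if their tangent lines are parallel. The sequence of division points $\mathcal{S}_M$: if $M$ has inflexion points, it is the set of all parameters $s$ such that $f(s)$ is an inflexion point or the tangent line at $f(s)$ is parallel to the tangent line at some inflexion point; if $M$ has no inflexion points, it is the set of all $s$ with $f'(s)$ parallel to $f'(s_0)$ for a fixed $s_0$ (including $s_0$); in both cases ordered compatibly with the orientation of $M$. *)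

theory Defs
  imports "HOL-Analysis.Analysis"
begin

definition Dk :: "nat \<Rightarrow> (real \<Rightarrow> real^2) \<Rightarrow> real \<Rightarrow> real^2" where
  "Dk k f s = (\<chi> i. (deriv ^^ k) (\<lambda>t. f t $ i) s)"

definition smooth_curve :: "(real \<Rightarrow> real^2) \<Rightarrow> bool" where
  "smooth_curve f \<longleftrightarrow> (\<forall>k i s. (deriv ^^ k) (\<lambda>t. f t $ i) differentiable (at s))"

definition det2 :: "real^2 \<Rightarrow> real^2 \<Rightarrow> real" where
  "det2 u v = u $ 1 * v $ 2 - u $ 2 * v $ 1"

definition arclength_closed_curve :: "(real \<Rightarrow> real^2) \<Rightarrow> real \<Rightarrow> bool" where
  "arclength_closed_curve f L \<longleftrightarrow>
     smooth_curve f \<and> L > 0 \<and> (\<forall>s. f (s + L) = f s) \<and>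
     (\<forall>p. 0 < p \<and> p < L \<longrightarrow> (\<exists>s. f (s + p) \<noteq> f s)) \<and>
     (\<forall>s. norm (Dk 1 f s) = 1)"

text \<open>Signed curvature of a unit-speed curve.\<close>
definition curvature :: "(real \<Rightarrow> real^2) \<Rightarrow> real \<Rightarrow> real" where
  "curvature f s = det2 (Dk 1 f s) (Dk 2 f s)"

definition sign_change :: "(real \<Rightarrow> real) \<Rightarrow> real \<Rightarrow> bool" where
  "sign_change g s \<longleftrightarrow>
     (\<exists>e>0. \<forall>t u. s - e < t \<and> t < s \<and> s < u \<and> u < s + e \<longrightarrow> g t * g u < 0)"

definition inflexion :: "(real \<Rightarrow> real^2) \<Rightarrow> real \<Rightarrow> bool" where
  "inflexion f s \<longleftrightarrow> curvature f s = 0 \<and> sign_change (curvature f) s"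

text \<open>Undulation point: tangent line with contact of order at least 4.\<close>
definition undulation :: "(real \<Rightarrow> real^2) \<Rightarrow> real \<Rightarrow> bool" where
  "undulation f s \<longleftrightarrow> curvature f s = 0 \<and> det2 (Dk 1 f s) (Dk 3 f s) = 0"

definition generic :: "(real \<Rightarrow> real^2) \<Rightarrow> real \<Rightarrow> bool" where
  "generic f L \<longleftrightarrow>
     (\<forall>s\<in>{0..<L}. \<forall>t\<in>{0..<L}. s \<noteq> t \<and> f s = f t \<longrightarrow> det2 (Dk 1 f s) (Dk 1 f t) \<noteq> 0) \<and>
     (\<forall>s. curvature f s = 0 \<longrightarrow> inflexion f s \<and> det2 (Dk 1 f s) (Dk 3 f s) \<noteq> 0) \<and>
     (\<forall>s. \<not> undulation f s) \<and>
     (\<forall>s\<in>{0..<L}. \<forall>t\<in>{0..<L}. f s \<noteq> f t \<and> det2 (Dk 1 f s) (Dk 1 f t) = 0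
        \<longrightarrow> \<not> inflexion f s \<or> \<not> inflexion f t)"

text \<open>The sequence of division points S_M, as a set of parameters in [0,L).\<close>
definition division_points :: "(real \<Rightarrow> real^2) \<Rightarrow> real \<Rightarrow> real \<Rightarrow> real set" where
  "division_points f L s0 =
     (if \<exists>t\<in>{0..<L}. inflexion f t
      then {s\<in>{0..<L}. inflexion f s \<or>
              (\<exists>t\<in>{0..<L}. inflexion f t \<and> det2 (Dk 1 f s) (Dk 1 f t) = 0)}
      else {s\<in>{0..<L}. det2 (Dk 1 f s) (Dk 1 f s0) = 0})"

end

theory Submission
  imports Defs
begin

text \<open>For v \<noteq> 0 the function s \<mapsto> det2 (f' s) v vanishes exactly where the tangent is parallel
  to v. At such a zero its derivative det2 (f'' s) v vanishes iff the curvature does, so by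
  genericity the zero is a sign change at non-inflexion points and, as det2 (f''' s) v \<noteq> 0, a
  sign-preserving zero at inflexion points. A continuous periodic function all of whose zeros are
  of these two kinds changes sign an even number of times per period. Hence, for every direction,
  the non-inflexion points with tangent in that direction are even in number, and so are the
  inflexion points, the sign changes of the curvature. If there are inflexion points, S_M is the
  disjoint union, over the inflexion points t, of the points with tangent parallel to that at t;
  each of these sets has odd size (t plus an even number of non-inflexion points), and an even
  number of odd sizes adds up to an even number.\<close>

definition sign_preserved :: "(real \<Rightarrow> real) \<Rightarrow> real \<Rightarrow> bool" where
  "sign_preserved g s \<longleftrightarrow>
     (\<exists>e>0. \<forall>t u. s - e < t \<and> t < s \<and> s < u \<and> u < s + e \<longrightarrow> g t * g u > 0)"

lemma sign_change_uminus_iff [simp]: "sign_change (\<lambda>x. - g x) s \<longleftrightarrow> sign_change g s"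
  by (simp add: sign_change_def)

lemma sign_preserved_uminus_iff [simp]: "sign_preserved (\<lambda>x. - g x) s \<longleftrightarrow> sign_preserved g s"
  by (simp add: sign_preserved_def)

lemma not_sign_change_and_preserved: "\<not> (sign_change g s \<and> sign_preserved g s)"
proof
  assume "sign_change g s \<and> sign_preserved g s"
  then obtain e1 e2 where
    e1: "e1 > 0" "\<forall>t u. s - e1 < t \<and> t < s \<and> s < u \<and> u < s + e1 \<longrightarrow> g t * g u < 0" and
    e2: "e2 > 0" "\<forall>t u. s - e2 < t \<and> t < s \<and> s < u \<and> u < s + e2 \<longrightarrow> g t * g u > 0"
    unfolding sign_change_def sign_preserved_def by blast
  define d where "d = min e1 e2 / 2"
  have "g (s - d) * g (s + d) < 0" "g (s - d) * g (s + d) > 0"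
    using e1(2)[rule_format, of "s - d" "s + d"] e2(2)[rule_format, of "s - d" "s + d"] e1(1) e2(1)
    by (auto simp: d_def)
  then show False by simp
qed

lemma eventually_nonzero_if_sign_change_or_preserved:
  assumes "sign_change g s \<or> sign_preserved g s"
  shows "\<forall>\<^sub>F y in at s. g y \<noteq> 0"
proof -
  obtain e where "e > 0"
    and e: "\<And>t u. s - e < t \<Longrightarrow> t < s \<Longrightarrow> s < u \<Longrightarrow> u < s + e \<Longrightarrow> g t * g u \<noteq> 0"
    using assms unfolding sign_change_def sign_preserved_def by (metis less_irrefl)
  have "g y \<noteq> 0" if "y \<noteq> s" "dist y s < e" for y
  proof (cases "y < s")
    case True
    then show ?thesis using e[of y "s + e/2"] that \<open>e > 0\<close> by (auto simp: dist_real_def)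
  next
    case False
    then show ?thesis using e[of "s - e/2" y] that \<open>e > 0\<close> by (auto simp: dist_real_def)
  qed
  then show ?thesis unfolding eventually_at using \<open>e > 0\<close> by blast
qed

lemma sgn_eq_if_no_zeros:
  fixes g :: "real \<Rightarrow> real"
  assumes "continuous_on {a..b} g" "a \<le> b" "\<And>x. x \<in> {a..b} \<Longrightarrow> g x \<noteq> 0"
  shows "sgn (g a) = sgn (g b)"
proof (rule ccontr)
  assume "sgn (g a) \<noteq> sgn (g b)"
  then have "g a \<le> 0 \<and> 0 \<le> g b \<or> g b \<le> 0 \<and> 0 \<le> g a"
    by (auto simp: sgn_if split: if_splits)
  then obtain x where "x \<in> {a..b}" "g x = 0"
    using IVT'[of g a 0 b] IVT2'[of g b 0 a] assms(1,2) by auto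
  with assms(3) show False by blast
qed

lemma sgn_mult_across_zero:
  fixes g :: "real \<Rightarrow> real"
  assumes cont: "continuous_on {t..u} g"
    and nz: "\<And>y. y \<in> {t..u} \<Longrightarrow> y \<noteq> z \<Longrightarrow> g y \<noteq> 0"
    and "0 < d" "d \<le> z - t" "d \<le> u - z"
  shows "sgn (g t * g u) = sgn (g (z - d) * g (z + d))"
proof -
  have "sgn (g t) = sgn (g (z - d))"
    by (rule sgn_eq_if_no_zeros) (use assms in \<open>auto intro: continuous_on_subset[OF cont]\<close>)
  moreover have "sgn (g (z + d)) = sgn (g u)"
    by (rule sgn_eq_if_no_zeros) (use assms in \<open>auto intro: continuous_on_subset[OF cont]\<close>)
  ultimately show ?thesis by (simp add: sgn_mult)
qed

lemma sign_change_iff_across_zero: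
  fixes g :: "real \<Rightarrow> real"
  assumes cont: "continuous_on {t..u} g" and "t < z" "z < u"
    and nz: "\<And>y. y \<in> {t..u} \<Longrightarrow> y \<noteq> z \<Longrightarrow> g y \<noteq> 0"
    and cases: "sign_change g z \<or> sign_preserved g z"
  shows "sign_change g z \<longleftrightarrow> g t * g u < 0"
proof -
  obtain e where "e > 0"
    and e: "\<And>t' u'. z - e < t' \<Longrightarrow> t' < z \<Longrightarrow> z < u' \<Longrightarrow> u' < z + e \<Longrightarrow>
                     (g t' * g u' < 0 \<longleftrightarrow> sign_change g z)"
  proof (cases "sign_change g z")
    case True
    then show ?thesis using that unfolding sign_change_def by blast
  next
    case False
    then show ?thesis using that cases unfolding sign_preserved_def
      by (metis (no_types, lifting) not_less_iff_gr_or_eq)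
  qed
  define d where "d = min (e/2) (min (z - t) (u - z))"
  have "0 < d" "d \<le> z - t" "d \<le> u - z" "d < e"
    using \<open>e > 0\<close> \<open>t < z\<close> \<open>z < u\<close> by (auto simp: d_def)
  then have "sgn (g t * g u) = sgn (g (z - d) * g (z + d))"
    by (intro sgn_mult_across_zero[OF cont nz]) auto
  moreover have "g (z - d) * g (z + d) < 0 \<longleftrightarrow> sign_change g z"
    using e \<open>0 < d\<close> \<open>d < e\<close> by simp
  ultimately show ?thesis by (metis sgn_less)
qed

lemma DERIV_pos_zero_sign:
  fixes g :: "real \<Rightarrow> real"
  assumes "DERIV g z :> D" "D > 0" "g z = 0"
  obtains e where "e > 0" "\<And>t. z - e < t \<Longrightarrow> t < z \<Longrightarrow> g t < 0"
    "\<And>u. z < u \<Longrightarrow> u < z + e \<Longrightarrow> g u > 0"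
proof -
  obtain d1 where "d1 > 0" and d1: "\<And>h. 0 < h \<Longrightarrow> h < d1 \<Longrightarrow> g z < g (z + h)"
    using DERIV_pos_inc_right[OF assms(1,2)] by blast
  obtain d2 where "d2 > 0" and d2: "\<And>h. 0 < h \<Longrightarrow> h < d2 \<Longrightarrow> g (z - h) < g z"
    using DERIV_pos_inc_left[OF assms(1,2)] by blast
  show ?thesis
  proof (rule that[of "min d1 d2"])
    show "g t < 0" if "z - min d1 d2 < t" "t < z" for t
      using d2[of "z - t"] that \<open>g z = 0\<close> by simp
    show "g u > 0" if "z < u" "u < z + min d1 d2" for u
      using d1[of "u - z"] that \<open>g z = 0\<close> by simp
  qed (use \<open>d1 > 0\<close> \<open>d2 > 0\<close> in simp)
qed

lemma sign_change_if_DERIV_nonzero: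
  fixes g :: "real \<Rightarrow> real"
  assumes "DERIV g z :> D" "D \<noteq> 0" "g z = 0"
  shows "sign_change g z"
proof -
  have pos: "sign_change h z" if h: "DERIV h z :> D" "D > 0" "h z = 0" for h D
  proof -
    obtain e where "e > 0" "\<And>t. z - e < t \<Longrightarrow> t < z \<Longrightarrow> h t < 0"
      "\<And>u. z < u \<Longrightarrow> u < z + e \<Longrightarrow> h u > 0"
      using DERIV_pos_zero_sign[OF h] by blast
    then show ?thesis unfolding sign_change_def by (meson mult_neg_pos)
  qed
  show ?thesis
  proof (cases "D > 0")
    case True
    with pos assms show ?thesis by blast
  next
    case False
    have "sign_change (\<lambda>x. - g x) z"
      by (rule pos[of _ "- D"]) (use assms False in \<open>auto intro: DERIV_minus\<close>)
    then show ?thesis by simp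
  qed
qed

lemma sign_preserved_if_DERIV2_nonzero:
  fixes g g' :: "real \<Rightarrow> real"
  assumes "\<And>y. DERIV g y :> g' y" "g z = 0" "g' z = 0" "DERIV g' z :> D" "D \<noteq> 0"
  shows "sign_preserved g z"
proof -
  have pos: "sign_preserved h z"
    if deriv_h: "\<And>y. DERIV h y :> h' y" and "h z = 0"
      and deriv2_h: "h' z = 0" "DERIV h' z :> D" "D > 0"
    for h h' D
  proof -
    obtain e where "e > 0" and left: "\<And>t. z - e < t \<Longrightarrow> t < z \<Longrightarrow> h' t < 0"
      and right: "\<And>u. z < u \<Longrightarrow> u < z + e \<Longrightarrow> h' u > 0"
      using DERIV_pos_zero_sign[OF deriv2_h(2,3,1)] by blast
    have "h t > 0" if t: "z - e < t" "t < z" for t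
    proof -
      obtain \<xi> where "t < \<xi>" "\<xi> < z" "h z - h t = (z - t) * h' \<xi>"
        using MVT2[OF \<open>t < z\<close> deriv_h] by blast
      with left[of \<xi>] t \<open>h z = 0\<close> mult_pos_neg[of "z - t" "h' \<xi>"] show ?thesis by simp
    qed
    moreover have "h u > 0" if u: "z < u" "u < z + e" for u
    proof -
      obtain \<xi> where "z < \<xi>" "\<xi> < u" "h u - h z = (u - z) * h' \<xi>"
        using MVT2[OF \<open>z < u\<close> deriv_h] by blast
      with right[of \<xi>] u \<open>h z = 0\<close> show ?thesis by simp
    qed
    ultimately show ?thesis unfolding sign_preserved_def using \<open>e > 0\<close> by (meson mult_pos_pos)
  qed
  show ?thesis
  proof (cases "D > 0")
    case True
    with pos assms show ?thesis by blast
  next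
    case False
    have "sign_preserved (\<lambda>x. - g x) z"
      by (rule pos[of _ "\<lambda>x. - g' x" "- D"]) (use assms False in \<open>auto intro: DERIV_minus\<close>)
    then show ?thesis by simp
  qed
qed
lemma card_Collect_insert:
  assumes "finite A" "a \<notin> A"
  shows "card {x\<in>insert a A. P x} = (if P a then Suc (card {x\<in>A. P x}) else card {x\<in>A. P x})"
proof -
  have "{x\<in>insert a A. P x} = (if P a then insert a {x\<in>A. P x} else {x\<in>A. P x})"
    by auto
  then show ?thesis using assms by simp
qed

lemma finite_strict_upper_bound_between:
  fixes a z :: real
  assumes "finite A" "\<forall>y\<in>A. y < z" "a < z"
  obtains t where "a < t" "t < z" "\<forall>y\<in>A. y < t"
proof -
  define m where "m = Max (insert a A)"
  have "a \<le> m" "m < z" "\<forall>y\<in>A. y \<le> m"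
    using assms by (simp_all add: m_def)
  then show ?thesis by (intro that[of "(m + z) / 2"]) fastforce+
qed

lemma mult_pos_iff_through:
  fixes x y w :: real
  assumes "x \<noteq> 0" "y \<noteq> 0" "w \<noteq> 0"
  shows "x * w > 0 \<longleftrightarrow> (x * y > 0 \<longleftrightarrow> y * w > 0)"
  using assms by (auto simp: zero_less_mult_iff)

locale sign_change_or_preserved_zeros =
  fixes g :: "real \<Rightarrow> real"
  assumes continuous: "continuous_on UNIV g"
    and zero_cases: "g z = 0 \<Longrightarrow> sign_change g z \<or> sign_preserved g z"
begin

lemma eventually_nonzero: "\<forall>\<^sub>F y in at x. g y \<noteq> 0"
proof (cases "g x = 0")
  case True
  then show ?thesis by (intro eventually_nonzero_if_sign_change_or_preserved zero_cases)
next
  case False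
  have "(g \<longlongrightarrow> g x) (at x)"
    using continuous by (simp add: continuous_on_eq_continuous_at isContD)
  then show ?thesis using False by (rule tendsto_imp_eventually_ne)
qed

lemma finite_zeros:
  assumes "compact K"
  shows "finite {x\<in>K. g x = 0}"
proof -
  have "{x. g x = 0} sparse_in K"
    using eventually_nonzero by (simp add: sparse_in_eventually_iff[of UNIV, simplified]
        sparse_in_subset[of _ UNIV K])
  then have "finite (K \<inter> {x. g x = 0})" using assms by (rule sparse_in_compact_finite)
  then show ?thesis by (simp add: Int_def)
qed

lemma parity_sign_changes_zero_set:
  assumes "finite Z"
  shows "a < b \<Longrightarrow> g a \<noteq> 0 \<Longrightarrow> g b \<noteq> 0 \<Longrightarrow> {z\<in>{a<..<b}. g z = 0} = Z \<Longrightarrow>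
    g a * g b > 0 \<longleftrightarrow> even (card {z\<in>Z. sign_change g z})"
  using assms
proof (induction Z arbitrary: b rule: finite_linorder_max_induct)
  case empty
  then have "g x \<noteq> 0" if "x \<in> {a..b}" for x
    using that by (cases "x = a \<or> x = b") auto
  then have "sgn (g a) = sgn (g b)"
    using \<open>a < b\<close> by (intro sgn_eq_if_no_zeros[of a b g] continuous_on_subset[OF continuous]) auto
  then show ?case
    using \<open>g a \<noteq> 0\<close> by (auto simp: sgn_if zero_less_mult_iff split: if_splits)
next
  case (insert z Z)
  have zero_iff: "y \<in> {a<..<b} \<and> g y = 0 \<longleftrightarrow> y = z \<or> y \<in> Z" for y
    using insert.prems(4) by blast
  then have "a < z" "z < b" by auto
  obtain t where "a < t" "t < z" and below_t: "\<forall>y\<in>Z. y < t"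
    using finite_strict_upper_bound_between[OF insert.hyps(1,2) \<open>a < z\<close>] .
  have "{y\<in>{a<..<t}. g y = 0} = Z"
  proof (intro set_eqI iffI)
    fix y assume "y \<in> {y\<in>{a<..<t}. g y = 0}"
    then show "y \<in> Z" using zero_iff[of y] \<open>t < z\<close> \<open>z < b\<close> by auto
  next
    fix y assume "y \<in> Z"
    then show "y \<in> {y\<in>{a<..<t}. g y = 0}" using zero_iff[of y] below_t by auto
  qed
  moreover have "g t \<noteq> 0" using zero_iff[of t] below_t \<open>a < t\<close> \<open>t < z\<close> \<open>z < b\<close> by auto
  ultimately have IH: "g a * g t > 0 \<longleftrightarrow> even (card {y\<in>Z. sign_change g y})"
    using insert.IH \<open>a < t\<close> \<open>g a \<noteq> 0\<close> by blast
  have "g y \<noteq> 0" if "y \<in> {t..b}" "y \<noteq> z" for y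
    using that zero_iff[of y] below_t \<open>a < t\<close> \<open>g b \<noteq> 0\<close> by (cases "y = b") auto
  then have "sign_change g z \<longleftrightarrow> g t * g b < 0"
    using zero_iff[of z] by (intro sign_change_iff_across_zero continuous_on_subset[OF continuous]
        zero_cases \<open>t < z\<close> \<open>z < b\<close>) auto
  moreover have "g t * g b > 0 \<longleftrightarrow> \<not> g t * g b < 0"
    using \<open>g t \<noteq> 0\<close> \<open>g b \<noteq> 0\<close> mult_eq_0_iff[of "g t" "g b"] by linarith
  moreover have "g a * g b > 0 \<longleftrightarrow> (g a * g t > 0 \<longleftrightarrow> g t * g b > 0)"
    using \<open>g a \<noteq> 0\<close> \<open>g t \<noteq> 0\<close> \<open>g b \<noteq> 0\<close> by (rule mult_pos_iff_through)
  moreover have "z \<notin> Z" using insert.hyps(2) by blast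
  ultimately show ?case
    using IH by (simp add: card_Collect_insert[OF insert.hyps(1)] del: insert_iff)
qed

lemma parity_sign_changes_interval:
  assumes "a < b" "g a \<noteq> 0" "g b \<noteq> 0"
  shows "g a * g b > 0 \<longleftrightarrow> even (card {z\<in>{a<..<b}. g z = 0 \<and> sign_change g z})"
proof -
  have "finite {z\<in>{a<..<b}. g z = 0}"
    using finite_zeros[of "{a..b}"] by (rule rev_finite_subset) auto
  from parity_sign_changes_zero_set[OF this assms] show ?thesis by simp
qed

lemma even_sign_changes_period:
  assumes "L > 0" and periodic: "\<And>s. g (s + L) = g s"
  shows "even (card {z\<in>{0..<L}. g z = 0 \<and> sign_change g z})"
proof -
  obtain d where "d > 0" and d: "\<And>y. y \<noteq> 0 \<Longrightarrow> dist y 0 < d \<Longrightarrow> g y \<noteq> 0"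
    using eventually_nonzero[of 0] unfolding eventually_at by blast
  define c where "c = - min d L / 2"
  have "-L < c" "c < 0" and nz: "\<And>y. c \<le> y \<Longrightarrow> y < 0 \<Longrightarrow> g y \<noteq> 0"
    using \<open>d > 0\<close> \<open>L > 0\<close> d by (auto simp: c_def dist_real_def)
  have "{z\<in>{c<..<c+L}. g z = 0} = {z\<in>{0..<L}. g z = 0}"
  proof (intro set_eqI iffI)
    fix z assume "z \<in> {z\<in>{0..<L}. g z = 0}"
    moreover have "g (z - L) = g z" using periodic[of "z - L"] by simp
    ultimately show "z \<in> {z\<in>{c<..<c+L}. g z = 0}"
      using nz[of "z - L"] \<open>c < 0\<close> by force
  next
    fix z assume "z \<in> {z\<in>{c<..<c+L}. g z = 0}"
    then show "z \<in> {z\<in>{0..<L}. g z = 0}"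
      using nz[of z] \<open>c < 0\<close> by (cases "z < 0") auto
  qed
  then have "{z\<in>{c<..<c+L}. g z = 0 \<and> sign_change g z} = {z\<in>{0..<L}. g z = 0 \<and> sign_change g z}"
    by blast
  moreover have "g c * g (c + L) > 0"
    using periodic[of c] nz[of c] \<open>c < 0\<close> by (simp flip: power2_eq_square)
  ultimately show ?thesis
    using parity_sign_changes_interval[of c "c + L"] \<open>L > 0\<close> \<open>c < 0\<close> periodic[of c] nz[of c] by simp
qed

end

lemma det2_scaleR_left [simp]: "det2 (c *\<^sub>R u) v = c * det2 u v"
  and det2_scaleR_right [simp]: "det2 u (c *\<^sub>R v) = c * det2 u v"
  and det2_self [simp]: "det2 u u = 0"
  by (simp_all add: det2_def algebra_simps)

lemma det2_swap: "det2 v u = - det2 u v"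
  by (simp add: det2_def)

lemma det2_eq_0_iff_parallel:
  assumes "u \<noteq> 0"
  shows "det2 u v = 0 \<longleftrightarrow> (\<exists>c. v = c *\<^sub>R u)"
proof
  assume det: "det2 u v = 0"
  have "u $ 1 \<noteq> 0 \<or> u $ 2 \<noteq> 0"
    using assms by (metis exhaust_2 vec_eq_iff zero_index)
  then show "\<exists>c. v = c *\<^sub>R u"
  proof
    assume "u $ 1 \<noteq> 0"
    then have "v = (v $ 1 / u $ 1) *\<^sub>R u"
      using det by (simp add: vec_eq_iff forall_2 det2_def field_simps)
    then show ?thesis ..
  next
    assume "u $ 2 \<noteq> 0"
    then have "v = (v $ 2 / u $ 2) *\<^sub>R u"
      using det by (simp add: vec_eq_iff forall_2 det2_def field_simps)
    then show ?thesis ..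
  qed
qed auto

lemma det2_eq_0_transfer:
  assumes "u \<noteq> 0" "v \<noteq> 0" "det2 u v = 0"
  shows "det2 w v = 0 \<longleftrightarrow> det2 u w = 0"
proof -
  obtain c where "v = c *\<^sub>R u" "c \<noteq> 0"
    using assms det2_eq_0_iff_parallel by fastforce
  then show ?thesis by (simp add: det2_swap[of w u])
qed

lemma det2_eq_0_trans:
  assumes "u \<noteq> 0" "det2 u a = 0" "det2 u b = 0"
  shows "det2 a b = 0"
  using assms det2_eq_0_iff_parallel by fastforce

lemma DERIV_Dk_component:
  assumes "smooth_curve f"
  shows "DERIV (\<lambda>s. Dk k f s $ i) s :> Dk (Suc k) f s $ i"
  using assms by (simp add: smooth_curve_def Dk_def DERIV_deriv_iff_real_differentiable)

lemma DERIV_det2_Dk: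
  assumes "smooth_curve f"
  shows "DERIV (\<lambda>s. det2 (Dk k f s) v) s :> det2 (Dk (Suc k) f s) v"
  unfolding det2_def by (intro DERIV_diff DERIV_cmult_right DERIV_Dk_component[OF assms])

lemma continuous_on_det2_Dk:
  assumes "smooth_curve f"
  shows "continuous_on UNIV (\<lambda>s. det2 (Dk k f s) v)"
  by (intro continuous_at_imp_continuous_on ballI DERIV_isCont[OF DERIV_det2_Dk[OF assms]])

lemma continuous_on_curvature:
  assumes "smooth_curve f"
  shows "continuous_on UNIV (curvature f)"
  unfolding curvature_def det2_def
  by (intro continuous_at_imp_continuous_on ballI continuous_intros
      DERIV_isCont[OF DERIV_Dk_component[OF assms]])

locale closed_curve =
  fixes f :: "real \<Rightarrow> real^2" and L :: real
  assumes arclength: "arclength_closed_curve f L"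
begin

lemma smooth: "smooth_curve f" and period_pos: "L > 0"
  using arclength by (simp_all add: arclength_closed_curve_def)

lemma tangent_nonzero: "Dk 1 f s \<noteq> 0"
  using arclength unfolding arclength_closed_curve_def by (metis norm_zero zero_neq_one)

lemma Dk_periodic: "Dk k f (s + L) = Dk k f s"
proof -
  have "Dk k f (s + L) $ i = Dk k f s $ i" for i
  proof (induction k arbitrary: s)
    case 0
    then show ?case using arclength by (simp add: arclength_closed_curve_def Dk_def)
  next
    case (Suc k)
    have "DERIV (\<lambda>t. Dk k f (t + L) $ i) s :> Dk (Suc k) f (s + L) $ i"
      by (subst DERIV_shift[symmetric]) (rule DERIV_Dk_component[OF smooth])
    then have "DERIV (\<lambda>t. Dk k f t $ i) s :> Dk (Suc k) f (s + L) $ i"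
      by (simp add: Suc.IH)
    then show ?case using DERIV_Dk_component[OF smooth] by (rule DERIV_unique)
  qed
  then show ?thesis by (simp add: vec_eq_iff)
qed

definition parallel_points :: "real^2 \<Rightarrow> real set" where
  "parallel_points v = {s\<in>{0..<L}. det2 (Dk 1 f s) v = 0}"

definition inflexions :: "real set" where
  "inflexions = {t\<in>{0..<L}. inflexion f t}"

end

locale generic_closed_curve = closed_curve +
  assumes generic: "generic f L"
begin

lemma inflexion_iff_curvature_zero: "inflexion f s \<longleftrightarrow> curvature f s = 0"
  using generic by (auto simp: generic_def inflexion_def)

lemma det2_Dk3_nonzero: "curvature f s = 0 \<Longrightarrow> det2 (Dk 1 f s) (Dk 3 f s) \<noteq> 0"
  using generic by (simp add: generic_def)

lemma inflexions_not_parallel: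
  assumes "s \<in> inflexions" "t \<in> inflexions" "s \<noteq> t"
  shows "det2 (Dk 1 f s) (Dk 1 f t) \<noteq> 0"
  \<comment> \<open>if f s = f t this is a transversal self-crossing, otherwise a parallel pair with at
    most one inflexion point\<close>
  using assms generic unfolding generic_def inflexions_def by (cases "f s = f t") blast+

lemma parallel_zero_cases:
  assumes "v \<noteq> 0" and zero: "det2 (Dk 1 f z) v = 0"
  shows "curvature f z \<noteq> 0 \<Longrightarrow> sign_change (\<lambda>s. det2 (Dk 1 f s) v) z"
    and "curvature f z = 0 \<Longrightarrow> sign_preserved (\<lambda>s. det2 (Dk 1 f s) v) z"
proof -
  have transfer: "det2 w v = 0 \<longleftrightarrow> det2 (Dk 1 f z) w = 0" for w
    using det2_eq_0_transfer[OF tangent_nonzero \<open>v \<noteq> 0\<close> zero] .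
  have D1: "DERIV (\<lambda>s. det2 (Dk 1 f s) v) y :> det2 (Dk 2 f y) v" for y
    using DERIV_det2_Dk[OF smooth, of 1] by (simp add: numeral_2_eq_2)
  have D2: "DERIV (\<lambda>s. det2 (Dk 2 f s) v) z :> det2 (Dk 3 f z) v"
    using DERIV_det2_Dk[OF smooth, of 2] by (simp add: numeral_2_eq_2 numeral_3_eq_3)
  show "sign_change (\<lambda>s. det2 (Dk 1 f s) v) z" if "curvature f z \<noteq> 0"
    using that transfer[of "Dk 2 f z"]
    by (intro sign_change_if_DERIV_nonzero[OF D1 _ zero]) (simp add: curvature_def)
  show "sign_preserved (\<lambda>s. det2 (Dk 1 f s) v) z" if "curvature f z = 0"
    using that det2_Dk3_nonzero transfer[of "Dk 2 f z"] transfer[of "Dk 3 f z"]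
    by (intro sign_preserved_if_DERIV2_nonzero[OF D1 zero _ D2]) (auto simp: curvature_def)
qed

lemma sign_change_or_preserved_zeros_parallel:
  assumes "v \<noteq> 0"
  shows "sign_change_or_preserved_zeros (\<lambda>s. det2 (Dk 1 f s) v)"
  using parallel_zero_cases[OF assms] continuous_on_det2_Dk[OF smooth]
  by unfold_locales blast+

lemma sign_change_or_preserved_zeros_curvature: "sign_change_or_preserved_zeros (curvature f)"
proof
  show "continuous_on UNIV (curvature f)" by (rule continuous_on_curvature[OF smooth])
  show "sign_change (curvature f) z \<or> sign_preserved (curvature f) z" if "curvature f z = 0" for z
    using that inflexion_iff_curvature_zero[of z] by (simp add: inflexion_def)
qed

lemma finite_parallel_points:
  assumes "v \<noteq> 0"
  shows "finite (parallel_points v)"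
proof -
  interpret sign_change_or_preserved_zeros "\<lambda>s. det2 (Dk 1 f s) v"
    using assms by (rule sign_change_or_preserved_zeros_parallel)
  show ?thesis
    using finite_zeros[of "{0..L}"] by (rule rev_finite_subset) (auto simp: parallel_points_def)
qed

lemma even_card_parallel_non_inflexions:
  assumes "v \<noteq> 0"
  shows "even (card {s\<in>parallel_points v. curvature f s \<noteq> 0})"
proof -
  interpret sign_change_or_preserved_zeros "\<lambda>s. det2 (Dk 1 f s) v"
    using assms by (rule sign_change_or_preserved_zeros_parallel)
  have "{s\<in>parallel_points v. curvature f s \<noteq> 0} =
      {z\<in>{0..<L}. det2 (Dk 1 f z) v = 0 \<and> sign_change (\<lambda>s. det2 (Dk 1 f s) v) z}"
    using parallel_zero_cases[OF assms] not_sign_change_and_preserved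
    by (auto simp: parallel_points_def)
  then show ?thesis
    using even_sign_changes_period[OF period_pos] by (simp add: Dk_periodic)
qed

lemma finite_inflexions: "finite inflexions"
proof -
  interpret sign_change_or_preserved_zeros "curvature f"
    by (rule sign_change_or_preserved_zeros_curvature)
  show ?thesis
    using finite_zeros[of "{0..L}"] by (rule rev_finite_subset) (auto simp: inflexions_def inflexion_def)
qed

lemma even_card_inflexions: "even (card inflexions)"
proof -
  interpret sign_change_or_preserved_zeros "curvature f"
    by (rule sign_change_or_preserved_zeros_curvature)
  have "inflexions = {z\<in>{0..<L}. curvature f z = 0 \<and> sign_change (curvature f) z}"
    by (auto simp: inflexions_def inflexion_def)
  then show ?thesis
    using even_sign_changes_period[OF period_pos] by (simp add: curvature_def Dk_periodic)
qed

lemma odd_card_parallel_points_inflexion: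
  assumes "t \<in> inflexions"
  shows "odd (card (parallel_points (Dk 1 f t)))"
proof -
  define S where "S = {s\<in>parallel_points (Dk 1 f t). curvature f s \<noteq> 0}"
  have "t \<in> parallel_points (Dk 1 f t)"
    using assms by (simp add: parallel_points_def inflexions_def)
  moreover have "s = t" if "s \<in> parallel_points (Dk 1 f t)" "curvature f s = 0" for s
    using that assms inflexions_not_parallel
    by (auto simp: parallel_points_def inflexions_def inflexion_iff_curvature_zero)
  ultimately have "parallel_points (Dk 1 f t) = insert t S"
    by (auto simp: S_def)
  moreover have "t \<notin> S"
    using assms by (simp add: S_def inflexions_def inflexion_iff_curvature_zero)
  moreover have "finite S"
    using finite_parallel_points[OF tangent_nonzero] by (simp add: S_def)
  ultimately have "card (parallel_points (Dk 1 f t)) = Suc (card S)"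
    by simp
  moreover have "even (card S)"
    unfolding S_def by (rule even_card_parallel_non_inflexions[OF tangent_nonzero])
  ultimately show ?thesis by simp
qed

lemma parallel_points_disjoint:
  assumes "s \<in> inflexions" "t \<in> inflexions" "s \<noteq> t"
  shows "parallel_points (Dk 1 f s) \<inter> parallel_points (Dk 1 f t) = {}"
  using det2_eq_0_trans[OF tangent_nonzero] inflexions_not_parallel[OF assms]
  by (auto simp: parallel_points_def)

lemma division_points_without_inflexions:
  assumes "inflexions = {}"
  shows "division_points f L s0 = {s\<in>parallel_points (Dk 1 f s0). curvature f s \<noteq> 0}"
  using assms
  by (auto simp: division_points_def parallel_points_def inflexions_def inflexion_iff_curvature_zero)

lemma division_points_with_inflexions:
  assumes "inflexions \<noteq> {}"
  shows "division_points f L s0 = (\<Union>t\<in>inflexions. parallel_points (Dk 1 f t))"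
  using assms by (auto simp: division_points_def parallel_points_def inflexions_def)

end

theorem corollary3p9:
  fixes f :: "real \<Rightarrow> real^2" and L s0 :: real
  assumes "arclength_closed_curve f L"
    and "generic f L"
  shows "finite (division_points f L s0) \<and> even (card (division_points f L s0))"
proof -
  interpret generic_closed_curve f L
    using assms by (simp add: generic_closed_curve_def generic_closed_curve_axioms_def closed_curve_def)
  have finite_P: "finite (parallel_points (Dk 1 f t))" for t
    using finite_parallel_points[OF tangent_nonzero] .
  show ?thesis
  proof (cases "inflexions = {}")
    case True
    then show ?thesis
      using division_points_without_inflexions finite_P
        even_card_parallel_non_inflexions[OF tangent_nonzero] by simp
  next
    case False
    have "card (division_points f L s0) = (\<Sum>t\<in>inflexions. card (parallel_points (Dk 1 f t)))"
      unfolding division_points_with_inflexions[OF False]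
      by (rule card_UN_disjoint) (use finite_inflexions finite_P parallel_points_disjoint in auto)
    moreover have "{t\<in>inflexions. odd (card (parallel_points (Dk 1 f t)))} = inflexions"
      using odd_card_parallel_points_inflexion by blast
    ultimately have "even (card (division_points f L s0))"
      by (simp add: even_sum_iff[OF finite_inflexions] even_card_inflexions)
    then show ?thesis
      using division_points_with_inflexions[OF False] finite_inflexions finite_P by simp
  qed
qed

end
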